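(* If $\rho_1$ and $\rho_2$ are radius functions on $\mathbb{R}^d$, then $\rho_1\vee\rho_2:=\max\{\rho_1,\rho_2\}$ is a radius function.
   Context: A radius function is a Borel function $\rho:\mathbb{R}^d\to(0,\infty)$ for which there is a constant $C<\infty$ such that $C^{-1}\rho(x)\le\rho(y)\le C\rho(x)$ for all $x\in\mathbb{R}^d$ and all $y\in B(x,\rho(x))$ (Euclidean open ball). *)

theory Defs
  imports "HOL-Analysis.Analysis"
begin

definition radius_function :: "('a::euclidean_space \<Rightarrow> real) \<Rightarrow> bool" where
  "radius_function \<rho> \<longleftrightarrow>
     \<rho> \<in> borel_measurable borel \<and>
     (\<forall>x. 0 < \<rho> x) \<and>
     (\<exists>C::real. 0 < C \<and>
        (\<forall>x. \<forall>y\<in>ball x (\<rho> x). \<rho> x / C \<le> \<rho> y \<and> \<rho> y \<le> C * \<rho> x))"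

end

theory Submission
  imports Defs
begin

text \<open>Take a common constant C for both functions and suppose, say, that rho1 x >= rho2 x, so
  that y lies in B(x, rho1 x). For the upper bound on rho2 y
  note that if rho2 y > C rho1 x, then x lies in B(y, rho2 y), whence rho2 x >= rho2 y / C > rho1 x,
  a contradiction. The lower bound is inherited from rho1, since max >= rho1.\<close>

definition slowly_varying :: "real \<Rightarrow> ('a::metric_space \<Rightarrow> real) \<Rightarrow> bool" where
  "slowly_varying C \<rho> \<longleftrightarrow>
     (\<forall>x. \<forall>y\<in>ball x (\<rho> x). \<rho> x / C \<le> \<rho> y \<and> \<rho> y \<le> C * \<rho> x)"

lemma radius_function_iff:
  "radius_function \<rho> \<longleftrightarrow>
     \<rho> \<in> borel_measurable borel \<and> (\<forall>x. 0 < \<rho> x) \<and> (\<exists>C>0. slowly_varying C \<rho>)"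
  unfolding radius_function_def slowly_varying_def by blast

lemma slowly_varyingD:
  assumes "slowly_varying C \<rho>" and "dist x y < \<rho> x"
  shows "\<rho> x / C \<le> \<rho> y" and "\<rho> y \<le> C * \<rho> x"
  using assms unfolding slowly_varying_def by auto

lemma slowly_varying_ge_1:
  assumes "slowly_varying C \<rho>" and "0 < \<rho> x"
  shows "1 \<le> C"
  using slowly_varyingD(2)[OF assms(1), of x x] assms(2) by simp

lemma slowly_varying_mono:
  assumes "slowly_varying C \<rho>" and "0 < C" and "C \<le> D" and "\<And>x. 0 < \<rho> x"
  shows "slowly_varying D \<rho>"
  unfolding slowly_varying_def
proof (intro allI ballI conjI)
  fix x y assume "y \<in> ball x (\<rho> x)"
  then have "\<rho> x / C \<le> \<rho> y" "\<rho> y \<le> C * \<rho> x"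
    using slowly_varyingD[OF assms(1)] by auto
  moreover have "\<rho> x / D \<le> \<rho> x / C" "C * \<rho> x \<le> D * \<rho> x"
    using assms(2,3) assms(4)[of x] by (simp_all add: divide_left_mono mult_right_mono)
  ultimately show "\<rho> x / D \<le> \<rho> y" "\<rho> y \<le> D * \<rho> x" by linarith+
qed

lemma slowly_varying_upper_bound:
  assumes "slowly_varying C \<rho>" and "1 \<le> C" and "dist x y < a" and "\<rho> x \<le> a"
  shows "\<rho> y \<le> C * a"
proof (rule ccontr)
  assume "\<not> \<rho> y \<le> C * a"
  then have big: "C * a < \<rho> y" by simp
  have "0 < a" using assms(3) zero_le_dist[of x y] by linarith
  then have "a \<le> C * a" using assms(2) by simp
  then have "dist y x < \<rho> y" using big assms(3) by (simp add: dist_commute)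
  then have "\<rho> y / C \<le> \<rho> x" by (rule slowly_varyingD[OF assms(1)])
  moreover have "a < \<rho> y / C" using big assms(2) by (simp add: field_simps)
  ultimately show False using assms(4) by simp
qed

lemma slowly_varying_max_bounds:
  assumes "slowly_varying C \<rho>1" and "slowly_varying C \<rho>2" and "1 \<le> C"
    and "\<rho>2 x \<le> \<rho>1 x" and "dist x y < \<rho>1 x" and "0 < \<rho>1 x"
  shows "max (\<rho>1 x) (\<rho>2 x) / C \<le> max (\<rho>1 y) (\<rho>2 y)"
    and "max (\<rho>1 y) (\<rho>2 y) \<le> C * max (\<rho>1 x) (\<rho>2 x)"
proof -
  have "\<rho>1 x / C \<le> \<rho>1 y" "\<rho>1 y \<le> C * \<rho>1 x"
    using slowly_varyingD[OF assms(1,5)] by auto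
  moreover have "\<rho>2 y \<le> C * \<rho>1 x"
    by (rule slowly_varying_upper_bound[OF assms(2,3,5,4)])
  ultimately show "max (\<rho>1 x) (\<rho>2 x) / C \<le> max (\<rho>1 y) (\<rho>2 y)"
    and "max (\<rho>1 y) (\<rho>2 y) \<le> C * max (\<rho>1 x) (\<rho>2 x)"
    using assms(4) by auto
qed

lemma slowly_varying_max:
  assumes "slowly_varying C \<rho>1" and "slowly_varying C \<rho>2" and "1 \<le> C"
    and "\<And>x. 0 < \<rho>1 x" and "\<And>x. 0 < \<rho>2 x"
  shows "slowly_varying C (\<lambda>x. max (\<rho>1 x) (\<rho>2 x))"
  unfolding slowly_varying_def
proof (intro allI ballI)
  fix x y assume "y \<in> ball x (max (\<rho>1 x) (\<rho>2 x))"
  then have y: "dist x y < max (\<rho>1 x) (\<rho>2 x)" by simp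
  show "max (\<rho>1 x) (\<rho>2 x) / C \<le> max (\<rho>1 y) (\<rho>2 y) \<and>
        max (\<rho>1 y) (\<rho>2 y) \<le> C * max (\<rho>1 x) (\<rho>2 x)"
  proof (cases "\<rho>2 x \<le> \<rho>1 x")
    case True
    then show ?thesis
      using y slowly_varying_max_bounds[OF assms(1-3) True _ assms(4)] by simp
  next
    case False
    then have "\<rho>1 x \<le> \<rho>2 x" by simp
    then show ?thesis
      using y slowly_varying_max_bounds[OF assms(2,1,3) _ _ assms(5)] by (simp add: max.commute)
  qed
qed

theorem mainTheorem7:
  fixes \<rho>1 \<rho>2 :: "'a::euclidean_space \<Rightarrow> real"
  assumes "radius_function \<rho>1" and "radius_function \<rho>2"
  shows "radius_function (\<lambda>x. max (\<rho>1 x) (\<rho>2 x))"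
proof -
  obtain C1 C2 where C1: "0 < C1" "slowly_varying C1 \<rho>1" and C2: "0 < C2" "slowly_varying C2 \<rho>2"
    and pos: "\<And>x. 0 < \<rho>1 x" "\<And>x. 0 < \<rho>2 x"
    and meas: "\<rho>1 \<in> borel_measurable borel" "\<rho>2 \<in> borel_measurable borel"
    using assms unfolding radius_function_iff by blast
  define C where "C = max C1 C2"
  have "1 \<le> C"
    using slowly_varying_ge_1[OF C1(2) pos(1)] unfolding C_def by simp
  moreover have "slowly_varying C \<rho>1" "slowly_varying C \<rho>2"
    using slowly_varying_mono[OF C1(2,1)] slowly_varying_mono[OF C2(2,1)] pos
    unfolding C_def by auto
  ultimately have "slowly_varying C (\<lambda>x. max (\<rho>1 x) (\<rho>2 x))"
    using slowly_varying_max pos by blast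
  moreover have "(\<lambda>x. max (\<rho>1 x) (\<rho>2 x)) \<in> borel_measurable borel"
    using meas by (intro borel_measurable_max)
  ultimately show ?thesis
    unfolding radius_function_iff using pos \<open>1 \<le> C\<close> by (auto simp: less_max_iff_disj intro!: exI[of _ C])
qed

end
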